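(* Every minimally $1/2$-tough claw-free graph has a vertex of degree $1$.
   Context: All graphs are finite, simple and undirected. A graph is claw-free if it contains no induced subgraph isomorphic to $K_{1,3}$. $\omega(H)$ denotes the number of components of $H$. A cutset of $G$ is a vertex set $S$ with $G-S$ disconnected. For positive real $t$, $G$ is $t$-tough if $\omega(G-S)\le |S|/t$ for every cutset $S$; the toughness $\tau(G)$ is the largest such $t$, with $\tau(K_n)=\infty$ for all $n\ge1$. $G$ is minimally $t$-tough if $\tau(G)=t$ and $\tau(G-e)<t$ for every edge $e$ of $G$. *)

theory Defs
  imports Complex_Main "HOL-Library.Extended_Real"
begin

definition simple_graph :: "'a set \<Rightarrow> 'a set set \<Rightarrow> bool" where
  "simple_graph V E \<longleftrightarrow> finite V \<and>
     (\<forall>e\<in>E. \<exists>u v. e = {u, v} \<and> u \<noteq> v \<and> u \<in> V \<and> v \<in> V)"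

definition degree :: "'a set set \<Rightarrow> 'a \<Rightarrow> nat" where
  "degree E v = card {u. {v, u} \<in> E}"

definition adj_on :: "'a set \<Rightarrow> 'a set set \<Rightarrow> ('a \<times> 'a) set" where
  "adj_on W E = {(u, v). u \<in> W \<and> v \<in> W \<and> {u, v} \<in> E}"

definition num_components :: "'a set \<Rightarrow> 'a set set \<Rightarrow> nat" where
  "num_components W E = card (W // (Id_on W \<union> (adj_on W E)\<^sup>+))"

definition cutset :: "'a set \<Rightarrow> 'a set set \<Rightarrow> 'a set \<Rightarrow> bool" where
  "cutset V E S \<longleftrightarrow> S \<subseteq> V \<and> num_components (V - S) E \<ge> 2"

definition tough :: "'a set \<Rightarrow> 'a set set \<Rightarrow> real \<Rightarrow> bool" where
  "tough V E t \<longleftrightarrow> (\<forall>S. cutset V E S \<longrightarrow>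
      real (num_components (V - S) E) \<le> real (card S) / t)"

text \<open>Toughness: the largest positive t such that G is t-tough (as an extended
  real; \<infinity> for complete graphs, which have no cutsets).\<close>
definition toughness :: "'a set \<Rightarrow> 'a set set \<Rightarrow> ereal" where
  "toughness V E = Sup {ereal t | t. t > 0 \<and> tough V E t}"

definition minimally_tough :: "'a set \<Rightarrow> 'a set set \<Rightarrow> real \<Rightarrow> bool" where
  "minimally_tough V E t \<longleftrightarrow> toughness V E = ereal t \<and>
     (\<forall>e\<in>E. toughness V (E - {e}) < ereal t)"

definition claw_free :: "'a set \<Rightarrow> 'a set set \<Rightarrow> bool" where
  "claw_free V E \<longleftrightarrow> \<not> (\<exists>v a b c. v \<in> V \<and> a \<in> V \<and> b \<in> V \<and> c \<in> V \<and>
      a \<noteq> b \<and> a \<noteq> c \<and> b \<noteq> c \<and>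
      {v, a} \<in> E \<and> {v, b} \<in> E \<and> {v, c} \<in> E \<and>
      {a, b} \<notin> E \<and> {a, c} \<notin> E \<and> {b, c} \<notin> E)"

end

(*
  A pendant set is a nonempty vertex set P with a vertex x outside it such that
  every neighbour of P lies in P or is x. For any vertex x, the other vertices form
  a pendant set at x, and a pendant singleton is a vertex of degree 1, so it suffices
  to find, for every pendant set P with at least two vertices, a smaller one.

  Take a in P adjacent to x. Minimality at the edge xa gives a set S such that
  G - S - xa has more than 2|S| components; by 1/2-toughness xa is then a bridge of
  G - S and G - S has at least 2|S| components. Since G is claw-free, a vertex of S
  sees at most two components of G - S, so this count is tight: every s in S sees
  exactly two components and each component is seen by a single vertex of S. If the
  component C of a in G - S - xa sees no vertex of S, it is pendant at x and lies in
  P; either C is smaller than P, or C = P, a is the only neighbour of x in P, and a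
  component of P - a is pendant at a. Otherwise some s in S sees C, and the other
  component seen by s is pendant at s and lies strictly inside P.
*)

theory Submission
  imports Defs
begin

definition reach :: "'a set \<Rightarrow> 'a set set \<Rightarrow> ('a \<times> 'a) set" where
  "reach W F = Id_on W \<union> (adj_on W F)\<^sup>+"

lemma num_components_reach: "num_components W F = card (W // reach W F)"
  by (simp add: num_components_def reach_def)

lemma trancl_adj_on_subset: "(adj_on W F)\<^sup>+ \<subseteq> W \<times> W"
  by (rule trancl_subset_Sigma) (auto simp: adj_on_def)

lemma reach_subset: "reach W F \<subseteq> W \<times> W"
  using trancl_adj_on_subset by (auto simp: reach_def)

lemma equiv_reach: "equiv W (reach W F)"
proof (rule equivI)
  show "reach W F \<subseteq> W \<times> W" by (rule reach_subset)
  show "refl_on W (reach W F)" using reach_subset by (auto simp: refl_on_def reach_def)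
  have "sym (adj_on W F)" by (auto simp: sym_def adj_on_def insert_commute)
  then have "sym ((adj_on W F)\<^sup>+)" by (rule sym_trancl)
  then show "sym (reach W F)" by (auto simp: reach_def sym_def)
  show "trans (reach W F)"
    using trancl_adj_on_subset by (auto simp: reach_def trans_def intro: trancl_trans)
qed

lemma reach_sym: "(y, z) \<in> reach W F \<Longrightarrow> (z, y) \<in> reach W F"
  using equiv_reach[of W F] by (auto elim: equivE simp: sym_def)

lemma reach_trans: "(y, z) \<in> reach W F \<Longrightarrow> (z, w) \<in> reach W F \<Longrightarrow> (y, w) \<in> reach W F"
  using equiv_reach[of W F] by (auto elim: equivE simp: trans_def)

lemma reach_refl: "y \<in> W \<Longrightarrow> (y, y) \<in> reach W F"
  by (auto simp: reach_def)

lemma reach_step: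
  assumes "(y, z) \<in> reach W F" "w \<in> W" "{z, w} \<in> F"
  shows "(y, w) \<in> reach W F"
proof -
  have "(z, w) \<in> adj_on W F" using assms reach_subset by (auto simp: adj_on_def)
  with assms(1) show ?thesis by (auto simp: reach_def intro: trancl_into_trancl)
qed

lemma reach_edge: "y \<in> W \<Longrightarrow> z \<in> W \<Longrightarrow> {y, z} \<in> F \<Longrightarrow> (y, z) \<in> reach W F"
  using reach_step reach_refl by metis

lemma reach_mono: "F \<subseteq> F' \<Longrightarrow> reach W F \<subseteq> reach W F'"
proof -
  assume "F \<subseteq> F'"
  then have "adj_on W F \<subseteq> adj_on W F'" by (auto simp: adj_on_def)
  then have "(adj_on W F)\<^sup>+ \<subseteq> (adj_on W F')\<^sup>+" by (rule trancl_mono_subset)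
  then show ?thesis by (auto simp: reach_def)
qed

text \<open>A walk that uses the deleted edge \<open>{x, a}\<close> first reaches \<open>x\<close> or \<open>a\<close> without it.\<close>

lemma reach_remove_edge:
  assumes "(y, z) \<in> reach W F"
  shows "(y, z) \<in> reach W (F - {{x, a}}) \<or> (y, x) \<in> reach W (F - {{x, a}})
       \<or> (y, a) \<in> reach W (F - {{x, a}})"
proof -
  have "(y, z) \<in> (adj_on W F)\<^sup>+ \<Longrightarrow> ?thesis"
  proof (induction rule: trancl_induct)
    case (base z)
    then have "y \<in> W" "z \<in> W" "{y, z} \<in> F" by (auto simp: adj_on_def)
    then show ?case
      using reach_edge[of y W z "F - {{x, a}}"] reach_refl[of y W]
      by (cases "{y, z} = {x, a}") (auto simp: doubleton_eq_iff)
  next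
    case (step z w)
    then have "w \<in> W" "{z, w} \<in> F" by (auto simp: adj_on_def)
    then show ?case
      using step.IH reach_step[of y z W "F - {{x, a}}" w]
      by (cases "{z, w} = {x, a}") (auto simp: doubleton_eq_iff)
  qed
  then show ?thesis using assms reach_refl by (auto simp: reach_def)
qed

lemma adj_on_remove_edge_outside: "x \<notin> W \<Longrightarrow> adj_on W (F - {{x, a}}) = adj_on W F"
  by (auto simp: adj_on_def doubleton_eq_iff)

lemma reach_remove_edge_eq:
  assumes "(x, a) \<in> reach W (F - {{x, a}})"
  shows "reach W (F - {{x, a}}) = reach W F"
proof
  let ?R = "reach W (F - {{x, a}})"
  show "?R \<subseteq> reach W F" by (rule reach_mono) auto
  have "adj_on W F \<subseteq> ?R"
  proof
    fix p assume "p \<in> adj_on W F"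
    then obtain u v where p: "p = (u, v)" "u \<in> W" "v \<in> W" "{u, v} \<in> F"
      by (auto simp: adj_on_def)
    show "p \<in> ?R"
    proof (cases "{u, v} = {x, a}")
      case True
      then have "(u = x \<and> v = a) \<or> (u = a \<and> v = x)" by (auto simp: doubleton_eq_iff)
      then show ?thesis using p(1) assms reach_sym by auto
    next
      case False
      then show ?thesis using p reach_edge[of u W v "F - {{x, a}}"] by auto
    qed
  qed
  then have "(adj_on W F)\<^sup>+ \<subseteq> ?R\<^sup>+" by (rule trancl_mono_subset)
  also have "?R\<^sup>+ = ?R"
    using equiv_reach[of W "F - {{x, a}}"] by (auto elim: equivE intro: trancl_id)
  finally have "(adj_on W F)\<^sup>+ \<subseteq> ?R" .
  then show "reach W F \<subseteq> ?R" using reach_refl by (auto simp: reach_def)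
qed

lemma reach_leaves_set:
  assumes "(y, z) \<in> reach W F" "y \<in> A" "z \<notin> A"
  shows "\<exists>p\<in>A. \<exists>q\<in>W - A. {p, q} \<in> F"
proof -
  have "(y, z) \<in> (adj_on W F)\<^sup>+" using assms by (auto simp: reach_def)
  then show ?thesis using assms(2,3)
  proof (induction rule: trancl_induct)
    case (base z) then show ?case by (auto simp: adj_on_def)
  next
    case (step z w)
    then show ?case by (cases "z \<in> A") (auto simp: adj_on_def)
  qed
qed

lemma reach_Image_eq: "(y, z) \<in> reach W F \<Longrightarrow> reach W F `` {y} = reach W F `` {z}"
  by (rule equiv_class_eq[OF equiv_reach])

lemma reach_class_eq: "D \<in> W // reach W F \<Longrightarrow> y \<in> D \<Longrightarrow> D = reach W F `` {y}"
  by (metis Image_singleton_iff equiv_class_eq equiv_reach quotientE)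

lemma quotient_reach_subset: "D \<in> W // reach W F \<Longrightarrow> D \<subseteq> W"
  using reach_subset by (auto elim!: quotientE)

lemma finite_quotient_reach: "finite W \<Longrightarrow> finite (W // reach W F)"
  by (rule finite_quotient[OF _ reach_subset])

lemma card_quotient_reach_le: "finite W \<Longrightarrow> card (W // reach W F) \<le> card W"
proof -
  assume "finite W"
  have "W // reach W F = (\<lambda>y. reach W F `` {y}) ` W" by (auto simp: quotient_def)
  then show ?thesis by (simp add: card_image_le \<open>finite W\<close>)
qed

lemma card_quotient_reach_remove_edge:
  assumes "finite W" "x \<in> W" "a \<in> W" "{x, a} \<in> F"
  shows "card (W // reach W (F - {{x, a}})) \<le> card (W // reach W F) + 1"
proof -
  let ?R = "reach W F" and ?R' = "reach W (F - {{x, a}})"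
  have R'R: "?R' \<subseteq> ?R" by (rule reach_mono) auto
  have xa: "(x, a) \<in> ?R" by (rule reach_edge[OF assms(2-4)])
  have cover: "W // ?R' \<subseteq> {?R' `` {x}, ?R' `` {a}} \<union> (W // ?R - {?R `` {x}})"
  proof
    fix C assume "C \<in> W // ?R'"
    then obtain y where y: "C = ?R' `` {y}" "y \<in> W" by (rule quotientE)
    show "C \<in> {?R' `` {x}, ?R' `` {a}} \<union> (W // ?R - {?R `` {x}})"
    proof (cases "(y, x) \<in> ?R")
      case True
      then have "(y, x) \<in> ?R' \<or> (y, a) \<in> ?R'"
        using reach_remove_edge[of y x W F x a] by blast
      then have "C = ?R' `` {x} \<or> C = ?R' `` {a}"
        using y(1) reach_Image_eq[of y x W] reach_Image_eq[of y a W] by auto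
      then show ?thesis by blast
    next
      case False
      have "(y, a) \<notin> ?R"
        using False reach_trans[OF _ reach_sym[OF xa], of y] by auto
      have "?R `` {y} \<subseteq> ?R' `` {y}"
      proof
        fix z assume "z \<in> ?R `` {y}"
        then have "(y, z) \<in> ?R" by simp
        then show "z \<in> ?R' `` {y}"
          using reach_remove_edge[of y z W F x a] R'R False \<open>(y, a) \<notin> ?R\<close> by auto
      qed
      moreover have "?R' `` {y} \<subseteq> ?R `` {y}" using R'R by auto
      ultimately have "C = ?R `` {y}" using y(1) by simp
      moreover have "?R `` {y} \<in> W // ?R" using y(2) by (rule quotientI)
      moreover have "?R `` {y} \<noteq> ?R `` {x}"
        using False eq_equiv_class[OF _ equiv_reach assms(2)] by blast
      ultimately show ?thesis by simp
    qed
  qed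
  have fin: "finite (W // ?R)" using assms(1) by (rule finite_quotient_reach)
  have "?R `` {x} \<in> W // ?R" using assms(2) by (rule quotientI)
  then have "card (W // ?R - {?R `` {x}}) + 1 = card (W // ?R)"
    using card_Suc_Diff1[OF fin] by simp
  moreover have "card (W // ?R') \<le> card ({?R' `` {x}, ?R' `` {a}} \<union> (W // ?R - {?R `` {x}}))"
    using fin by (intro card_mono[OF _ cover]) simp
  moreover note card_Un_le[of "{?R' `` {x}, ?R' `` {a}}" "W // ?R - {?R `` {x}}"]
  moreover have "card {?R' `` {x}, ?R' `` {a}} \<le> 2" by (rule card_insert_le_m1) auto
  ultimately show ?thesis by linarith
qed

lemma different_components_nonadjacent:
  assumes "D \<in> W // reach W F" "D' \<in> W // reach W F" "D \<noteq> D'" "y \<in> D" "y' \<in> D'"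
  shows "y \<noteq> y'" "{y, y'} \<notin> F"
proof -
  have D: "D = reach W F `` {y}" "D' = reach W F `` {y'}"
    using reach_class_eq[OF assms(1,4)] reach_class_eq[OF assms(2,5)] .
  then show "y \<noteq> y'" using assms(3) by auto
  show "{y, y'} \<notin> F"
  proof
    assume "{y, y'} \<in> F"
    moreover have "y \<in> W" "y' \<in> W"
      using assms(4,5) quotient_reach_subset[OF assms(1)] quotient_reach_subset[OF assms(2)] by auto
    ultimately have "(y, y') \<in> reach W F" by (intro reach_edge)
    then have "reach W F `` {y} = reach W F `` {y'}" by (rule reach_Image_eq)
    then show False using D assms(3) by simp
  qed
qed

lemma card_Union_ge_imp_disjoint:
  fixes T :: "'i \<Rightarrow> 'b set"
  assumes "finite I" and fin: "\<And>i. i \<in> I \<Longrightarrow> finite (T i)"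
    and le: "\<And>i. i \<in> I \<Longrightarrow> card (T i) \<le> k"
    and ge: "k * card I \<le> card (\<Union>i\<in>I. T i)"
  shows "i \<in> I \<Longrightarrow> card (T i) = k"
    and "i \<in> I \<Longrightarrow> j \<in> I \<Longrightarrow> D \<in> T i \<Longrightarrow> D \<in> T j \<Longrightarrow> i = j"
proof -
  let ?\<Sigma> = "Sigma I T"
  have fin\<Sigma>: "finite ?\<Sigma>" using assms by auto
  have "snd ` ?\<Sigma> = (\<Union>i\<in>I. T i)" by force
  then have "k * card I \<le> card (snd ` ?\<Sigma>)" using ge by simp
  moreover have "card (snd ` ?\<Sigma>) \<le> card ?\<Sigma>" using fin\<Sigma> by (rule card_image_le)
  moreover have "card ?\<Sigma> = (\<Sum>i\<in>I. card (T i))" using assms by simp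
  moreover have "(\<Sum>i\<in>I. card (T i)) \<le> (\<Sum>i\<in>I. k)" using le by (rule sum_mono)
  ultimately have tight: "card (snd ` ?\<Sigma>) = card ?\<Sigma>" "(\<Sum>i\<in>I. card (T i)) = (\<Sum>i\<in>I. k)"
    by (simp_all add: mult.commute)
  show "card (T i) = k" if "i \<in> I" using sum_mono_inv[OF tight(2) le that \<open>finite I\<close>] .
  have inj: "inj_on snd ?\<Sigma>" using eq_card_imp_inj_on[OF fin\<Sigma> tight(1)] .
  show "i = j" if "i \<in> I" "j \<in> I" "D \<in> T i" "D \<in> T j"
    using inj_onD[OF inj, of "(i, D)" "(j, D)"] that by simp
qed

definition pendant :: "'a set \<Rightarrow> 'a set set \<Rightarrow> 'a set \<Rightarrow> 'a \<Rightarrow> bool" where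
  "pendant V E P x \<longleftrightarrow> P \<noteq> {} \<and> P \<subseteq> V \<and> x \<in> V \<and> x \<notin> P \<and>
     (\<forall>p\<in>P. \<forall>q. {p, q} \<in> E \<longrightarrow> q \<in> P \<or> q = x)"

lemma pendant_component_subset:
  assumes pen: "pendant V E P x" and "F \<subseteq> E" "y \<in> P" "x \<notin> reach W F `` {y}"
  shows "reach W F `` {y} \<subseteq> P"
proof (rule ccontr)
  let ?C = "reach W F `` {y}"
  assume "\<not> ?C \<subseteq> P"
  then obtain z where z: "z \<in> ?C" "z \<notin> P" by blast
  then have yz: "(y, z) \<in> reach W F" by simp
  have "y \<in> W" using yz reach_subset by blast
  then have "y \<in> ?C \<inter> P" using assms(3) reach_refl by simp
  then obtain p q where pq: "p \<in> ?C \<inter> P" "q \<in> W - ?C \<inter> P" "{p, q} \<in> F"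
    using reach_leaves_set[OF yz, of "?C \<inter> P"] z(2) by blast
  then have "(y, q) \<in> reach W F" using reach_step[of y p W F q] by blast
  moreover have "q \<in> P \<or> q = x"
    using pen pq(1,3) assms(2) unfolding pendant_def by blast
  ultimately show False using pq(2) assms(4) by auto
qed

lemma toughness_le_ratio:
  assumes "cutset V E S"
  shows "toughness V E \<le> ereal (card S / num_components (V - S) E)"
  unfolding toughness_def
proof (rule Sup_least)
  let ?m = "real (num_components (V - S) E)"
  have "?m > 0" using assms by (simp add: cutset_def)
  fix z assume "z \<in> {ereal t |t. t > 0 \<and> tough V E t}"
  then obtain t where t: "z = ereal t" "t > 0" "tough V E t" by blast
  then have "?m \<le> card S / t" using assms unfolding tough_def by blast
  then show "z \<le> ereal (card S / ?m)"
    using t \<open>?m > 0\<close> by (simp add: field_simps)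
qed

lemma tough_le_toughness: "t > 0 \<Longrightarrow> tough V E t \<Longrightarrow> ereal t \<le> toughness V E"
  unfolding toughness_def by (rule Sup_upper) blast

lemma tough_if_card_le_1:
  assumes "finite V" "card V \<le> 1"
  shows "tough V E t"
  unfolding tough_def
proof (intro allI impI)
  fix S assume "cutset V E S"
  then have "2 \<le> num_components (V - S) E" by (simp add: cutset_def)
  moreover have "num_components (V - S) E \<le> card V"
    using assms(1) card_quotient_reach_le[of "V - S" E] card_mono[of V "V - S"]
    by (simp add: num_components_reach)
  ultimately have False using assms(2) by linarith
  then show "real (num_components (V - S) E) \<le> real (card S) / t" ..
qed

lemma toughness_cutset_bound:
  assumes "toughness V E = ereal t" "cutset V E S"
  shows "t * num_components (V - S) E \<le> card S"
proof -
  have pos: "real (num_components (V - S) E) > 0" using assms(2) by (simp add: cutset_def)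
  have "t \<le> card S / num_components (V - S) E"
    using toughness_le_ratio[OF assms(2)] assms(1) by simp
  then show ?thesis using pos by (simp add: field_simps)
qed

lemma cutset_if_toughness_less:
  fixes t :: real
  assumes "toughness V E < ereal t" "t > 0"
  obtains S where "cutset V E S" "card S < t * num_components (V - S) E"
proof -
  have "\<not> tough V E t"
  proof
    assume "tough V E t"
    then have "ereal t \<le> toughness V E" by (rule tough_le_toughness[OF assms(2)])
    then show False using assms(1) by simp
  qed
  then obtain S where "cutset V E S" "card S / t < num_components (V - S) E"
    unfolding tough_def by auto
  then show ?thesis using that assms(2) by (simp add: field_simps)
qed

locale claw_free_half_tough =
  fixes V :: "'a set" and E :: "'a set set"
  assumes simple: "simple_graph V E"
    and claw_free: "claw_free V E"
    and half_tough: "cutset V E S \<Longrightarrow> num_components (V - S) E \<le> 2 * card S"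
begin

lemma finite_V: "finite V"
  using simple by (simp add: simple_graph_def)

lemma edge_vertices:
  assumes "{u, v} \<in> E" shows "u \<in> V" "v \<in> V" "u \<noteq> v"
proof -
  obtain p q where "{u, v} = {p, q}" "p \<noteq> q" "p \<in> V" "q \<in> V"
    using simple assms unfolding simple_graph_def by blast
  then show "u \<in> V" "v \<in> V" "u \<noteq> v" by (auto simp: doubleton_eq_iff)
qed

lemma claw_free_neighbours:
  assumes "{v, a} \<in> E" "{v, b} \<in> E" "{v, c} \<in> E" "a \<noteq> b" "a \<noteq> c" "b \<noteq> c"
  shows "{a, b} \<in> E \<or> {a, c} \<in> E \<or> {b, c} \<in> E"
proof -
  have "v \<in> V" "a \<in> V" "b \<in> V" "c \<in> V" using assms(1-3) edge_vertices by auto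
  then show ?thesis using claw_free assms unfolding claw_free_def by blast
qed

lemma connected:
  assumes "y \<in> V" "z \<in> V" shows "(y, z) \<in> reach V E"
proof -
  let ?Q = "V // reach V E"
  have "\<not> cutset V E {}" using half_tough[of "{}"] by (auto simp: cutset_def)
  then have "card ?Q \<le> Suc 0" by (simp add: cutset_def num_components_reach)
  with card_le_Suc0_iff_eq[OF finite_quotient_reach[OF finite_V]]
  have all: "\<forall>C\<in>?Q. \<forall>C'\<in>?Q. C = C'" by (rule iffD1)
  have "reach V E `` {y} \<in> ?Q" "reach V E `` {z} \<in> ?Q"
    using assms by (auto intro: quotientI)
  then have "reach V E `` {y} = reach V E `` {z}" using all by simp
  then show ?thesis by (rule eq_equiv_class[OF _ equiv_reach assms(2)])
qed

lemma card_adjacent_components_le_2: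
  assumes "s \<in> V" "W \<subseteq> V"
  shows "card {D \<in> W // reach W E. \<exists>y\<in>D. {s, y} \<in> E} \<le> 2"
proof (rule ccontr)
  let ?T = "{D \<in> W // reach W E. \<exists>y\<in>D. {s, y} \<in> E}"
  assume "\<not> ?thesis"
  then have "3 \<le> card ?T" by simp
  then obtain T where T: "T \<subseteq> ?T" "card T = 3" by (rule obtain_subset_with_card_n)
  then obtain D1 D2 D3 where D: "T = {D1, D2, D3}" "D1 \<noteq> D2" "D2 \<noteq> D3" "D1 \<noteq> D3"
    by (auto simp: card_3_iff)
  have m: "D1 \<in> ?T" "D2 \<in> ?T" "D3 \<in> ?T" using T(1) D(1) by auto
  then have q: "D1 \<in> W // reach W E" "D2 \<in> W // reach W E" "D3 \<in> W // reach W E" by auto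
  obtain y1 y2 y3 where y: "y1 \<in> D1" "y2 \<in> D2" "y3 \<in> D3"
    and sy: "{s, y1} \<in> E" "{s, y2} \<in> E" "{s, y3} \<in> E" using m by blast
  have "y1 \<noteq> y2" "{y1, y2} \<notin> E"
    using different_components_nonadjacent[OF q(1,2) D(2) y(1,2)] by auto
  moreover have "y2 \<noteq> y3" "{y2, y3} \<notin> E"
    using different_components_nonadjacent[OF q(2,3) D(3) y(2,3)] by auto
  moreover have "y1 \<noteq> y3" "{y1, y3} \<notin> E"
    using different_components_nonadjacent[OF q(1,3) D(4) y(1,3)] by auto
  ultimately show False using claw_free_neighbours[OF sy] by blast
qed

lemma component_adjacent_to_cut:
  assumes "S \<subseteq> V" "S \<noteq> {}" "D \<in> (V - S) // reach (V - S) E"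
  obtains s y where "s \<in> S" "y \<in> D" "{s, y} \<in> E"
proof -
  let ?R = "reach (V - S) E"
  obtain y0 where D: "D = ?R `` {y0}" "y0 \<in> V - S" using assms(3) by (rule quotientE)
  obtain v where v: "v \<in> S" using assms(2) by blast
  have "(y0, v) \<in> reach V E" using connected D(2) v assms(1) by auto
  moreover have "v \<notin> D" using v quotient_reach_subset[OF assms(3)] by auto
  moreover have "y0 \<in> D" using D reach_refl[of y0 "V - S" E] by simp
  ultimately obtain p q where pq: "p \<in> D" "q \<in> V - D" "{p, q} \<in> E"
    using reach_leaves_set[of y0 v V E D] by auto
  have "q \<in> S"
  proof (rule ccontr)
    assume "q \<notin> S"
    moreover have "(y0, p) \<in> ?R" using pq(1) D(1) by simp
    ultimately have "(y0, q) \<in> ?R" using pq(2,3) reach_step[of y0 p "V - S" E q] by simp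
    then show False using pq(2) D(1) by simp
  qed
  moreover have "{q, p} \<in> E" using pq(3) by (simp add: insert_commute)
  ultimately show ?thesis using that pq(1) by simp
qed

lemma tight_cut:
  assumes "S \<subseteq> V" "S \<noteq> {}" "2 * card S \<le> card ((V - S) // reach (V - S) E)"
  defines "adj s \<equiv> {D \<in> (V - S) // reach (V - S) E. \<exists>y\<in>D. {s, y} \<in> E}"
  shows "s \<in> S \<Longrightarrow> card (adj s) = 2"
    and "s \<in> S \<Longrightarrow> s' \<in> S \<Longrightarrow> D \<in> adj s \<Longrightarrow> D \<in> adj s' \<Longrightarrow> s = s'"
proof -
  let ?Q = "(V - S) // reach (V - S) E"
  have "finite S" using assms(1) finite_V by (rule finite_subset)
  have "finite ?Q" using finite_V by (intro finite_quotient_reach) simp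
  have "?Q \<subseteq> (\<Union>s\<in>S. adj s)"
  proof
    fix D assume "D \<in> ?Q"
    then obtain s y where "s \<in> S" "y \<in> D" "{s, y} \<in> E"
      using component_adjacent_to_cut[OF assms(1,2)] by metis
    then show "D \<in> (\<Union>s\<in>S. adj s)" using \<open>D \<in> ?Q\<close> unfolding adj_def by blast
  qed
  moreover have "(\<Union>s\<in>S. adj s) \<subseteq> ?Q" unfolding adj_def by blast
  ultimately have "(\<Union>s\<in>S. adj s) = ?Q" by (rule equalityI[rotated])
  then have "2 * card S \<le> card (\<Union>s\<in>S. adj s)" using assms(3) by simp
  moreover have "finite (adj s)" for s using \<open>finite ?Q\<close> unfolding adj_def by simp
  moreover have "card (adj s) \<le> 2" if "s \<in> S" for s
    using card_adjacent_components_le_2[of s "V - S"] that assms(1) unfolding adj_def by blast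
  ultimately show "s \<in> S \<Longrightarrow> card (adj s) = 2"
    and "s \<in> S \<Longrightarrow> s' \<in> S \<Longrightarrow> D \<in> adj s \<Longrightarrow> D \<in> adj s' \<Longrightarrow> s = s'"
    using card_Union_ge_imp_disjoint[OF \<open>finite S\<close>, of adj 2] by blast+
qed

lemma tight_cut_second_pendant_component:
  assumes "S \<subseteq> V" "2 * card S \<le> card ((V - S) // reach (V - S) E)"
    and "s \<in> S" "D0 \<in> (V - S) // reach (V - S) E" "y0 \<in> D0" "{s, y0} \<in> E"
  obtains D y where "D \<in> (V - S) // reach (V - S) E" "D \<noteq> D0" "y \<in> D" "{s, y} \<in> E"
    "pendant V E D s"
proof -
  let ?Q = "(V - S) // reach (V - S) E"
  let ?adj = "\<lambda>s. {D \<in> ?Q. \<exists>y\<in>D. {s, y} \<in> E}"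
  have "S \<noteq> {}" using assms(3) by blast
  note tight = tight_cut[OF assms(1) this assms(2)]
  have "D0 \<in> ?adj s" using assms(4-6) by blast
  moreover obtain D1 D2 where "?adj s = {D1, D2}" "D1 \<noteq> D2"
    using tight(1)[OF assms(3)] by (auto simp: card_2_iff)
  ultimately obtain D where D: "D \<in> ?adj s" "D \<noteq> D0"
    by (cases "D1 = D0") auto
  then obtain y where y: "D \<in> ?Q" "y \<in> D" "{s, y} \<in> E" by blast
  have "pendant V E D s"
    unfolding pendant_def
  proof (intro conjI ballI allI impI)
    show "D \<noteq> {}" "D \<subseteq> V" "s \<in> V" "s \<notin> D"
      using y quotient_reach_subset[OF y(1)] assms(1,3) by auto
  next
    fix p q assume p: "p \<in> D" and pq: "{p, q} \<in> E"
    show "q \<in> D \<or> q = s"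
    proof (cases "q \<in> S")
      case True
      have "{q, p} \<in> E" using pq by (simp add: insert_commute)
      then have "D \<in> ?adj q" using y(1) p by blast
      then show ?thesis using tight(2)[OF True assms(3) _ D(1)] by blast
    next
      case False
      then have "q \<in> V - S" using edge_vertices(2)[OF pq] by simp
      moreover have "(y, p) \<in> reach (V - S) E" using reach_class_eq[OF y(1,2)] p by blast
      ultimately have "(y, q) \<in> reach (V - S) E" using reach_step[of y p "V - S" E q] pq by simp
      then show ?thesis using reach_class_eq[OF y(1,2)] by blast
    qed
  qed
  then show ?thesis using that D(2) y by blast
qed

lemma finite_pendant: "pendant V E P x \<Longrightarrow> finite P"
  using finite_V finite_subset unfolding pendant_def by blast

lemma pendant_attachment:
  assumes "pendant V E P x"
  obtains a where "a \<in> P" "{a, x} \<in> E"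
proof -
  have P: "P \<subseteq> V" "P \<noteq> {}" "x \<in> V" "x \<notin> P" using assms unfolding pendant_def by auto
  then obtain p where "p \<in> P" by blast
  then have "(p, x) \<in> reach V E" using connected P by blast
  then obtain a q where aq: "a \<in> P" "q \<in> V - P" "{a, q} \<in> E"
    using reach_leaves_set \<open>p \<in> P\<close> P(4) by metis
  then have "q = x" using assms unfolding pendant_def by blast
  then show ?thesis using that aq by blast
qed

lemma pendant_singleton_degree:
  assumes "pendant V E {a} x"
  shows "degree E a = 1"
proof -
  have "{u. {a, u} \<in> E} = {x}"
  proof
    show "{u. {a, u} \<in> E} \<subseteq> {x}"
      using assms edge_vertices(3) unfolding pendant_def by blast
    show "{x} \<subseteq> {u. {a, u} \<in> E}"
      using pendant_attachment[OF assms] by blast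
  qed
  then show ?thesis by (simp add: degree_def)
qed

lemma pendant_shrink_at_unique_attachment:
  assumes pen: "pendant V E P x" and "a \<in> P" "P \<noteq> {a}"
    and unique: "\<And>c. c \<in> P \<Longrightarrow> {c, x} \<in> E \<Longrightarrow> c = a"
  obtains Q y where "pendant V E Q y" "card Q < card P"
proof -
  let ?W = "P - {a}"
  obtain q where q: "q \<in> ?W" using assms(2,3) by blast
  let ?K = "reach ?W E `` {q}"
  have KW: "?K \<subseteq> ?W" using reach_subset by blast
  have "pendant V E ?K a"
    unfolding pendant_def
  proof (intro conjI ballI allI impI)
    show "?K \<noteq> {}" "?K \<subseteq> V" "a \<in> V" "a \<notin> ?K"
      using q reach_refl[of q ?W E] KW assms(2) pen unfolding pendant_def by auto
  next
    fix p r assume p: "p \<in> ?K" and pr: "{p, r} \<in> E"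
    have "p \<in> P" "p \<noteq> a" using p KW by auto
    then have "r \<in> P" "r \<noteq> x" using pen pr unique unfolding pendant_def by blast+
    then show "r \<in> ?K \<or> r = a" using p pr reach_step[of q p ?W E r] by blast
  qed
  moreover have "card ?K < card P"
    using KW assms(2) finite_pendant[OF pen] by (intro psubset_card_mono) auto
  ultimately show ?thesis using that by blast
qed

lemma pendant_shrink_at_tight_cut:
  assumes pen: "pendant V E P x" and "a \<in> P"
    and "S \<subseteq> V" "2 * card S \<le> card ((V - S) // reach (V - S) E)"
    and "x \<in> V - S" "(x, a) \<in> reach (V - S) E"
    and "c \<in> P" "(x, c) \<in> reach (V - S) E" "s \<in> S" "{c, s} \<in> E"
  obtains D where "pendant V E D s" "card D < card P"
proof -
  let ?R = "reach (V - S) E"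
  have "c \<in> ?R `` {x}" using assms(8) by simp
  moreover have "?R `` {x} \<in> (V - S) // ?R" using assms(5) by (rule quotientI)
  moreover have "{s, c} \<in> E" using assms(10) by (simp add: insert_commute)
  ultimately obtain D y where D: "D \<in> (V - S) // ?R" "D \<noteq> ?R `` {x}" "y \<in> D"
    "{s, y} \<in> E" "pendant V E D s"
    using tight_cut_second_pendant_component[OF assms(3,4,9)] by blast
  have "x \<notin> D"
  proof
    assume "x \<in> D"
    then show False using D(2) reach_class_eq[OF D(1)] by simp
  qed
  have "a \<notin> D"
  proof
    assume "a \<in> D"
    then have "D = ?R `` {a}" using reach_class_eq[OF D(1)] by simp
    also have "\<dots> = ?R `` {x}" using reach_Image_eq[OF reach_sym[OF assms(6)]] .
    finally show False using D(2) by simp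
  qed
  have "s \<in> P \<or> s = x" using pen assms(7,10) unfolding pendant_def by blast
  then have "s \<in> P" using assms(5,9) by blast
  then have "y \<in> P \<or> y = x" using pen D(4) unfolding pendant_def by blast
  then have "y \<in> P" using D(3) \<open>x \<notin> D\<close> by blast
  then have "D \<subseteq> P"
    using pendant_component_subset[OF pen subset_refl] \<open>x \<notin> D\<close> reach_class_eq[OF D(1,3)] by simp
  then have "D \<subset> P" using assms(2) \<open>a \<notin> D\<close> by blast
  with finite_pendant[OF pen] have "card D < card P" by (rule psubset_card_mono)
  then show ?thesis using that D(5) by blast
qed

lemma bridge_component_pendant:
  assumes "{x, a} \<in> E" "x \<in> V - S" "a \<in> V - S"
    and bridge: "(x, a) \<notin> reach (V - S) (E - {{x, a}})"
    and no_S_neighbour: "\<And>c s. c \<in> reach (V - S) (E - {{x, a}}) `` {a} \<Longrightarrow> s \<in> S \<Longrightarrow> {c, s} \<notin> E"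
  defines "C \<equiv> reach (V - S) (E - {{x, a}}) `` {a}"
  shows "pendant V E C x" and "\<And>c. c \<in> C \<Longrightarrow> {c, x} \<in> E \<Longrightarrow> c = a"
proof -
  let ?R = "reach (V - S) (E - {{x, a}})"
  have xC: "x \<notin> C"
  proof
    assume "x \<in> C"
    then have "(a, x) \<in> ?R" unfolding C_def by simp
    then show False using bridge by (auto dest: reach_sym)
  qed
  show "c = a" if "c \<in> C" "{c, x} \<in> E" for c
  proof (rule ccontr)
    assume "c \<noteq> a"
    then have "{c, x} \<in> E - {{x, a}}" using that(2) by (auto simp: doubleton_eq_iff)
    then have "(a, x) \<in> ?R" using that(1) assms(2) reach_step unfolding C_def by fastforce
    then show False using xC unfolding C_def by simp
  qed
  show "pendant V E C x"
    unfolding pendant_def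
  proof (intro conjI ballI allI impI)
    show "C \<noteq> {}" "C \<subseteq> V" "x \<in> V" "x \<notin> C"
      using reach_refl[OF assms(3), of "E - {{x, a}}"] reach_subset assms(2) xC unfolding C_def by auto
  next
    fix p q assume p: "p \<in> C" and pq: "{p, q} \<in> E"
    have "q \<in> V - S" using edge_vertices(2)[OF pq] no_S_neighbour p pq unfolding C_def by blast
    show "q \<in> C \<or> q = x"
    proof (cases "{p, q} = {x, a}")
      case True
      then show ?thesis using p xC by (auto simp: doubleton_eq_iff)
    next
      case False
      then show ?thesis using p pq \<open>q \<in> V - S\<close> reach_step unfolding C_def by fastforce
    qed
  qed
qed

lemma pendant_complement_vertex:
  assumes "x \<in> V" "2 \<le> card V"
  shows "pendant V E (V - {x}) x"
proof -
  have "V - {x} \<noteq> {}"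
  proof
    assume "V - {x} = {}"
    then have "V \<subseteq> {x}" by blast
    then show False using assms(2) card_mono[of "{x}" V] by simp
  qed
  then show ?thesis using assms(1) edge_vertices(2) unfolding pendant_def by blast
qed

end

locale critical_claw_free_half_tough = claw_free_half_tough +
  assumes edge_critical:
    "e \<in> E \<Longrightarrow> \<exists>S. cutset V (E - {e}) S \<and> 2 * card S < num_components (V - S) (E - {e})"
begin

lemma critical_edge_cut:
  assumes "{x, a} \<in> E"
  obtains S where "S \<subseteq> V" "x \<in> V - S" "a \<in> V - S"
    "(x, a) \<notin> reach (V - S) (E - {{x, a}})"
    "2 * card S \<le> card ((V - S) // reach (V - S) E)"
proof -
  obtain S where cut: "cutset V (E - {{x, a}}) S"
    and many: "2 * card S < num_components (V - S) (E - {{x, a}})"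
    using edge_critical[OF assms] by blast
  have SV: "S \<subseteq> V" using cut by (simp add: cutset_def)
  have split: "num_components (V - S) (E - {{x, a}}) \<noteq> num_components (V - S) E"
  proof
    assume eq: "num_components (V - S) (E - {{x, a}}) = num_components (V - S) E"
    then have "cutset V E S" using cut by (simp add: cutset_def)
    then show False using half_tough many eq by fastforce
  qed
  have "x \<notin> S"
    using split adj_on_remove_edge_outside[of x "V - S" E a] by (auto simp: num_components_def)
  moreover have "a \<notin> S"
    using split adj_on_remove_edge_outside[of a "V - S" E x]
    by (auto simp: num_components_def insert_commute)
  moreover have "x \<in> V" "a \<in> V" using edge_vertices[OF assms] by auto
  moreover have bridge: "(x, a) \<notin> reach (V - S) (E - {{x, a}})"
    using split reach_remove_edge_eq[of x a "V - S" E] by (auto simp: num_components_reach)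
  ultimately have "num_components (V - S) (E - {{x, a}}) \<le> card ((V - S) // reach (V - S) E) + 1"
    using card_quotient_reach_remove_edge[of "V - S" x a E] finite_V assms
    by (simp add: num_components_reach)
  then show ?thesis
    using that SV \<open>x \<notin> S\<close> \<open>a \<notin> S\<close> \<open>x \<in> V\<close> \<open>a \<in> V\<close> bridge many by simp
qed

lemma pendant_shrink:
  assumes pen: "pendant V E P x" and "2 \<le> card P"
  obtains Q y where "pendant V E Q y" "card Q < card P"
proof -
  obtain a where a: "a \<in> P" "{a, x} \<in> E" using pendant_attachment[OF pen] .
  then have xa: "{x, a} \<in> E" by (simp add: insert_commute)
  obtain S where S: "S \<subseteq> V" "x \<in> V - S" "a \<in> V - S"
    "(x, a) \<notin> reach (V - S) (E - {{x, a}})"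
    "2 * card S \<le> card ((V - S) // reach (V - S) E)"
    using critical_edge_cut[OF xa] .
  let ?R = "reach (V - S) E" and ?R' = "reach (V - S) (E - {{x, a}})"
  let ?C = "?R' `` {a}"
  have "x \<notin> ?C" using S(4) by (auto dest: reach_sym)
  then have CP: "?C \<subseteq> P" using pendant_component_subset[OF pen _ a(1)] by blast
  show ?thesis
  proof (cases "\<exists>c\<in>?C. \<exists>s\<in>S. {c, s} \<in> E")
    case False
    then have pen_C: "pendant V E ?C x" and unique: "\<And>c. c \<in> ?C \<Longrightarrow> {c, x} \<in> E \<Longrightarrow> c = a"
      using bridge_component_pendant[OF xa S(2-4)] by blast+
    show ?thesis
    proof (cases "?C = P")
      case True
      have "P \<noteq> {a}" using assms(2) by auto
      then show ?thesis
        using pendant_shrink_at_unique_attachment[OF pen a(1)] unique True that by blast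
    next
      case False
      then have "card ?C < card P" using CP finite_pendant[OF pen] by (intro psubset_card_mono) auto
      then show ?thesis using that pen_C by blast
    qed
  next
    case True
    then obtain c s where cs: "c \<in> ?C" "s \<in> S" "{c, s} \<in> E" by blast
    have "(x, a) \<in> ?R" by (rule reach_edge[OF S(2,3) xa])
    moreover have "(a, c) \<in> ?R" using cs(1) reach_mono[of "E - {{x, a}}" E] by auto
    ultimately have "(x, c) \<in> ?R" by (rule reach_trans)
    moreover have "c \<in> P" using cs(1) CP by blast
    ultimately show ?thesis
      using pendant_shrink_at_tight_cut[OF pen a(1) S(1,5,2) \<open>(x, a) \<in> ?R\<close>] cs(2,3) that
      by blast
  qed
qed

lemma pendant_degree_one_vertex:
  "pendant V E P x \<Longrightarrow> \<exists>v\<in>V. degree E v = 1"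
proof (induction "card P" arbitrary: P x rule: less_induct)
  case less
  show ?case
  proof (cases "2 \<le> card P")
    case True
    then obtain Q y where "pendant V E Q y" "card Q < card P"
      using pendant_shrink[OF less.prems] by blast
    then show ?thesis using less.hyps by blast
  next
    case False
    have "finite P" "P \<noteq> {}" "P \<subseteq> V"
      using less.prems finite_pendant unfolding pendant_def by blast+
    then have "card P \<noteq> 0" by simp
    then have "card P = 1" using False by linarith
    then obtain a where "P = {a}" by (rule card_1_singletonE)
    then show ?thesis using pendant_singleton_degree less.prems \<open>P \<subseteq> V\<close> by blast
  qed
qed

end

lemma critical_claw_free_half_tough_if_minimally_tough:
  assumes "simple_graph V E" "claw_free V E" "minimally_tough V E (1/2)"
  shows "critical_claw_free_half_tough V E"
proof
  have tough: "toughness V E = ereal (1/2)"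
    and critical: "\<And>e. e \<in> E \<Longrightarrow> toughness V (E - {e}) < ereal (1/2)"
    using assms(3) unfolding minimally_tough_def by auto
  show "num_components (V - S) E \<le> 2 * card S" if "cutset V E S" for S
    using toughness_cutset_bound[OF tough that] by simp
  show "\<exists>S. cutset V (E - {e}) S \<and> 2 * card S < num_components (V - S) (E - {e})"
    if e: "e \<in> E" for e
  proof -
    obtain S where "cutset V (E - {e}) S" "card S < 1/2 * num_components (V - S) (E - {e})"
      using cutset_if_toughness_less[OF critical[OF e]] by auto
    then show ?thesis by auto
  qed
qed (fact assms)+

lemma two_le_card_if_toughness_less_1:
  assumes "finite V" "toughness V E = ereal t" "t < 1"
  shows "2 \<le> card V"
proof (rule ccontr)
  assume "\<not> 2 \<le> card V"
  then have "tough V E 1" using assms(1) by (intro tough_if_card_le_1) simp_all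
  then have "ereal 1 \<le> toughness V E" by (intro tough_le_toughness) simp_all
  then show False using assms(2,3) by simp
qed

theorem mainTheorem13:
  fixes V :: "'a set" and E :: "'a set set"
  assumes "simple_graph V E"
    and "claw_free V E"
    and "minimally_tough V E (1/2)"
  shows "\<exists>v\<in>V. degree E v = 1"
proof -
  interpret critical_claw_free_half_tough V E
    using critical_claw_free_half_tough_if_minimally_tough[OF assms] .
  have "toughness V E = ereal (1/2)" using assms(3) by (simp add: minimally_tough_def)
  then have "2 \<le> card V" by (rule two_le_card_if_toughness_less_1[OF finite_V]) simp
  then obtain x where "x \<in> V" by fastforce
  then show ?thesis
    using pendant_degree_one_vertex pendant_complement_vertex \<open>2 \<le> card V\<close> by blast
qed

end
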